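(* For every $f:\{0,1\}^d\to\{0,1\}$, with $x,y,z$ sampled uniformly and independently from $\{0,1\}^d$, $$\Pr[(x,y)\text{ violates linearity}]\le 3\varepsilon_f,\qquad \Pr[(x,y)\text{ and }(x,z)\text{ both violate linearity}]\le\varepsilon_f+4\varepsilon_f^2.$$
   Context: A pair $(x,y)\in(\{0,1\}^d)^2$ violates linearity (for $f$) if $f(x)+f(y)\neq f(x\oplus y)$ (mod 2), where $\oplus$ is bitwise XOR. $\varepsilon_f$ (distance of $f$ to linearity) is the minimum over linear $g$ of $\Pr_{x\sim\{0,1\}^d}[f(x)\neq g(x)]$, where $g:\{0,1\}^d\to\{0,1\}$ is linear if $g(x)=\sum_{i\in S}x[i]\bmod2$ for some $S\subseteq[d]$. *)

theory Defs
  imports "HOL-Analysis.Analysis"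
begin

text \<open>Boolean functions take values in bool (True = 1, False = 0); addition mod 2 is
  inequality of booleans (exclusive or).\<close>

definition cube :: "nat \<Rightarrow> (nat \<Rightarrow> bool) set" where
  "cube d = {x. \<forall>i. d \<le> i \<longrightarrow> \<not> x i}"

definition bxor :: "(nat \<Rightarrow> bool) \<Rightarrow> (nat \<Rightarrow> bool) \<Rightarrow> (nat \<Rightarrow> bool)" where
  "bxor x y = (\<lambda>i. x i \<noteq> y i)"

definition violates :: "((nat \<Rightarrow> bool) \<Rightarrow> bool) \<Rightarrow> (nat \<Rightarrow> bool) \<Rightarrow> (nat \<Rightarrow> bool) \<Rightarrow> bool" where
  "violates f x y \<longleftrightarrow> (f x \<noteq> f y) \<noteq> f (bxor x y)"

definition lin_fun :: "nat set \<Rightarrow> (nat \<Rightarrow> bool) \<Rightarrow> bool" where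
  "lin_fun S x = odd (card {i\<in>S. x i})"

definition dist_fun :: "nat \<Rightarrow> ((nat \<Rightarrow> bool) \<Rightarrow> bool) \<Rightarrow> ((nat \<Rightarrow> bool) \<Rightarrow> bool) \<Rightarrow> real" where
  "dist_fun d f g = real (card {x\<in>cube d. f x \<noteq> g x}) / real (card (cube d))"

definition eps_lin :: "nat \<Rightarrow> ((nat \<Rightarrow> bool) \<Rightarrow> bool) \<Rightarrow> real" where
  "eps_lin d f = Min ((\<lambda>S. dist_fun d f (lin_fun S)) ` Pow {0..<d})"

end

theory Submission
  imports Defs
begin

text \<open>Let \<open>g\<close> be a linear function closest to \<open>f\<close> and \<open>B\<close> the set where they differ, so
  \<open>|B| = \<epsilon>\<^sub>f 2\<^sup>d\<close>. Since \<open>g\<close> is additive, a violating pair \<open>(x, y)\<close> has \<open>x\<close>, \<open>y\<close> or \<open>x \<oplus> y\<close> in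
  \<open>B\<close>. For fixed \<open>x \<notin> B\<close> at most \<open>2|B|\<close> points \<open>y\<close> qualify, since \<open>y \<mapsto> x \<oplus> y\<close> is injective.
  Hence at most \<open>|B| 2\<^sup>d + 2\<^sup>d 2|B|\<close> pairs violate linearity, and at most
  \<open>|B| 4\<^sup>d + 2\<^sup>d (2|B|)\<^sup>2\<close> triples \<open>(x, y, z)\<close> have both \<open>(x, y)\<close> and \<open>(x, z)\<close> violating.\<close>

lemma bxor_bxor [simp]: "bxor x (bxor x y) = y"
  by (auto simp: bxor_def)

lemma bxor_in_cube: "x \<in> cube d \<Longrightarrow> y \<in> cube d \<Longrightarrow> bxor x y \<in> cube d"
  by (auto simp: cube_def bxor_def)

lemma cube_eq_image_Pow: "cube d = (\<lambda>S i. i \<in> S) ` Pow {0..<d}"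
proof
  show "cube d \<subseteq> (\<lambda>S i. i \<in> S) ` Pow {0..<d}"
  proof
    fix x assume "x \<in> cube d"
    then have "{i. x i} \<in> Pow {0..<d}" and "x = (\<lambda>i. i \<in> {i. x i})"
      by (auto simp: cube_def not_le[symmetric])
    then show "x \<in> (\<lambda>S i. i \<in> S) ` Pow {0..<d}" by blast
  qed
qed (auto simp: cube_def)

lemma finite_cube [simp]: "finite (cube d)"
  by (simp add: cube_eq_image_Pow)

lemma card_cube_pos: "card (cube d) > 0"
proof -
  have "(\<lambda>_. False) \<in> cube d" by (simp add: cube_def)
  then show ?thesis by (auto simp: card_gt_0_iff)
qed

lemma lin_fun_bxor:
  assumes "finite S"
  shows "lin_fun S (bxor x y) = (lin_fun S x \<noteq> lin_fun S y)"
proof -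
  define A where "A = {i\<in>S. x i}"
  define B where "B = {i\<in>S. y i}"
  have fin: "finite A" "finite B" using assms by (auto simp: A_def B_def)
  have sym_diff: "{i\<in>S. bxor x y i} = (A - B) \<union> (B - A)" by (auto simp: A_def B_def bxor_def)
  have "card {i\<in>S. bxor x y i} = card (A - B) + card (B - A)"
    unfolding sym_diff by (rule card_Un_disjoint) (use fin in auto)
  moreover have "card A = card (A \<inter> B) + card (A - B)" "card B = card (A \<inter> B) + card (B - A)"
    using fin card_Int_Diff[of A B] card_Int_Diff[of B A] by (auto simp: Int_commute)
  ultimately show ?thesis
    unfolding lin_fun_def A_def[symmetric] B_def[symmetric] by auto
qed

lemma eps_lin_attained:
  obtains S where "S \<subseteq> {0..<d}" "eps_lin d f = dist_fun d f (lin_fun S)"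
proof -
  have "eps_lin d f \<in> (\<lambda>S. dist_fun d f (lin_fun S)) ` Pow {0..<d}"
    unfolding eps_lin_def by (rule Min_in) auto
  then show ?thesis using that by auto
qed

definition hits :: "(nat \<Rightarrow> bool) set \<Rightarrow> (nat \<Rightarrow> bool) \<Rightarrow> (nat \<Rightarrow> bool) \<Rightarrow> bool" where
  "hits B x y \<longleftrightarrow> x \<in> B \<or> y \<in> B \<or> bxor x y \<in> B"

lemma violates_imp_hits_disagreement:
  assumes additive: "\<And>x y. g (bxor x y) = (g x \<noteq> g y)"
    and "x \<in> cube d" "y \<in> cube d" "violates f x y"
  shows "hits {z \<in> cube d. f z \<noteq> g z} x y"
  using assms bxor_in_cube[of x d y] additive[of x y]
  by (auto simp: hits_def violates_def)

lemma card_translates_le: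
  assumes "finite B"
  shows "card {y \<in> cube d. bxor x y \<in> B} \<le> card B"
proof (rule card_inj_on_le[OF _ _ assms])
  show "inj_on (bxor x) {y \<in> cube d. bxor x y \<in> B}"
    by (metis bxor_bxor inj_onI)
qed auto

lemma card_hits_slice_le:
  assumes "finite B" "x \<notin> B"
  shows "card {y \<in> cube d. hits B x y} \<le> 2 * card B"
proof -
  have "{y \<in> cube d. hits B x y} \<subseteq> B \<union> {y \<in> cube d. bxor x y \<in> B}"
    using assms(2) by (auto simp: hits_def)
  then have "card {y \<in> cube d. hits B x y} \<le> card (B \<union> {y \<in> cube d. bxor x y \<in> B})"
    using assms(1) by (intro card_mono) auto
  also have "\<dots> \<le> card B + card {y \<in> cube d. bxor x y \<in> B}"
    by (rule card_Un_le)
  also have "\<dots> \<le> 2 * card B"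
    using card_translates_le[OF assms(1)] by simp
  finally show ?thesis .
qed

lemma card_Sigma_le:
  assumes "finite A" "\<And>a. a \<in> A \<Longrightarrow> finite (F a)" "\<And>a. a \<in> A \<Longrightarrow> card (F a) \<le> K"
  shows "card (Sigma A F) \<le> card A * K"
proof -
  have "card (Sigma A F) = (\<Sum>a\<in>A. card (F a))" using assms by simp
  also have "\<dots> \<le> card A * K" using sum_bounded_above[of A "\<lambda>a. card (F a)" K] assms by simp
  finally show ?thesis .
qed

lemma card_hitting_pairs_le:
  assumes "B \<subseteq> cube d"
  shows "card {(x, y). x \<in> cube d \<and> y \<in> cube d \<and> hits B x y}
    \<le> 3 * card (cube d) * card B"
proof -
  let ?C = "cube d" and ?H = "\<lambda>x. {y \<in> cube d. hits B x y}"
  have fin: "finite B" using finite_subset[OF assms finite_cube] .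
  have "{(x, y). x \<in> ?C \<and> y \<in> ?C \<and> hits B x y} \<subseteq> B \<times> ?C \<union> Sigma (?C - B) ?H"
    by auto
  then have "card {(x, y). x \<in> ?C \<and> y \<in> ?C \<and> hits B x y} \<le> card (B \<times> ?C \<union> Sigma (?C - B) ?H)"
    using fin by (intro card_mono) auto
  also have "\<dots> \<le> card (B \<times> ?C) + card (Sigma (?C - B) ?H)"
    by (rule card_Un_le)
  also have "\<dots> \<le> card B * card ?C + card (?C - B) * (2 * card B)"
    using card_Sigma_le[of "?C - B" ?H "2 * card B"] card_hits_slice_le[OF fin]
    by (simp add: card_cartesian_product)
  also have "\<dots> \<le> card B * card ?C + card ?C * (2 * card B)"
    by (simp add: card_mono)
  finally show ?thesis by (simp add: mult_ac)
qed

lemma card_hitting_triples_le: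
  assumes "B \<subseteq> cube d"
  shows "card {(x, y, z). x \<in> cube d \<and> y \<in> cube d \<and> z \<in> cube d \<and> hits B x y \<and> hits B x z}
    \<le> card B * card (cube d) ^ 2 + card (cube d) * (2 * card B) ^ 2"
proof -
  let ?C = "cube d" and ?H = "\<lambda>x. {y \<in> cube d. hits B x y}"
  have fin: "finite B" using finite_subset[OF assms finite_cube] .
  have "{(x, y, z). x \<in> ?C \<and> y \<in> ?C \<and> z \<in> ?C \<and> hits B x y \<and> hits B x z}
      \<subseteq> B \<times> ?C \<times> ?C \<union> Sigma (?C - B) (\<lambda>x. ?H x \<times> ?H x)"
    by auto
  then have "card {(x, y, z). x \<in> ?C \<and> y \<in> ?C \<and> z \<in> ?C \<and> hits B x y \<and> hits B x z}
      \<le> card (B \<times> ?C \<times> ?C \<union> Sigma (?C - B) (\<lambda>x. ?H x \<times> ?H x))"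
    using fin by (intro card_mono) auto
  also have "\<dots> \<le> card (B \<times> ?C \<times> ?C) + card (Sigma (?C - B) (\<lambda>x. ?H x \<times> ?H x))"
    by (rule card_Un_le)
  also have "\<dots> \<le> card B * card ?C ^ 2 + card (?C - B) * (2 * card B) ^ 2"
  proof -
    have "card (?H x \<times> ?H x) \<le> (2 * card B) ^ 2" if "x \<in> ?C - B" for x
    proof -
      have "card (?H x \<times> ?H x) = card (?H x) ^ 2"
        by (simp add: card_cartesian_product power2_eq_square)
      also have "\<dots> \<le> (2 * card B) ^ 2"
        using card_hits_slice_le[OF fin, of x d] that by (intro power_mono) simp_all
      finally show ?thesis .
    qed
    then show ?thesis
      using card_Sigma_le[of "?C - B" "\<lambda>x. ?H x \<times> ?H x" "(2 * card B) ^ 2"]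
      by (simp add: card_cartesian_product power2_eq_square)
  qed
  also have "\<dots> \<le> card B * card ?C ^ 2 + card ?C * (2 * card B) ^ 2"
    by (simp add: card_mono)
  finally show ?thesis .
qed

lemma card_violating_pairs_le:
  assumes "\<And>x y. g (bxor x y) = (g x \<noteq> g y)"
  shows "card {(x, y). x \<in> cube d \<and> y \<in> cube d \<and> violates f x y}
    \<le> 3 * card (cube d) * card {z \<in> cube d. f z \<noteq> g z}"
  (is "card ?V \<le> _ * card ?B")
proof -
  have "card ?V \<le> card {(x, y). x \<in> cube d \<and> y \<in> cube d \<and> hits ?B x y}"
  proof (rule card_mono)
    show "finite {(x, y). x \<in> cube d \<and> y \<in> cube d \<and> hits ?B x y}"
      by (rule finite_subset[of _ "cube d \<times> cube d"]) auto
  qed (use violates_imp_hits_disagreement[of g, OF assms] in auto)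
  also have "\<dots> \<le> 3 * card (cube d) * card ?B"
    by (rule card_hitting_pairs_le) auto
  finally show ?thesis .
qed

lemma card_violating_triples_le:
  assumes "\<And>x y. g (bxor x y) = (g x \<noteq> g y)"
  shows "card {(x, y, z). x \<in> cube d \<and> y \<in> cube d \<and> z \<in> cube d
      \<and> violates f x y \<and> violates f x z}
    \<le> card {z \<in> cube d. f z \<noteq> g z} * card (cube d) ^ 2
      + card (cube d) * (2 * card {z \<in> cube d. f z \<noteq> g z}) ^ 2"
  (is "card ?W \<le> card ?B * _ + _")
proof -
  have "card ?W \<le> card {(x, y, z). x \<in> cube d \<and> y \<in> cube d \<and> z \<in> cube d
      \<and> hits ?B x y \<and> hits ?B x z}"
  proof (rule card_mono)
    show "finite {(x, y, z). x \<in> cube d \<and> y \<in> cube d \<and> z \<in> cube d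
        \<and> hits ?B x y \<and> hits ?B x z}"
      by (rule finite_subset[of _ "cube d \<times> cube d \<times> cube d"]) auto
  qed (use violates_imp_hits_disagreement[of g, OF assms] in auto)
  also have "\<dots> \<le> card ?B * card (cube d) ^ 2 + card (cube d) * (2 * card ?B) ^ 2"
    by (rule card_hitting_triples_le) auto
  finally show ?thesis .
qed

theorem claimB3:
  fixes d :: nat and f :: "(nat \<Rightarrow> bool) \<Rightarrow> bool"
  shows "real (card {(x, y). x \<in> cube d \<and> y \<in> cube d \<and> violates f x y})
           / real (card (cube d)) ^ 2 \<le> 3 * eps_lin d f
    \<and> real (card {(x, y, z). x \<in> cube d \<and> y \<in> cube d \<and> z \<in> cube d
                        \<and> violates f x y \<and> violates f x z})
           / real (card (cube d)) ^ 3 \<le> eps_lin d f + 4 * (eps_lin d f)^2"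
proof -
  obtain S where "S \<subseteq> {0..<d}" and eps: "eps_lin d f = dist_fun d f (lin_fun S)"
    by (rule eps_lin_attained)
  then have additive: "lin_fun S (bxor x y) = (lin_fun S x \<noteq> lin_fun S y)" for x y
    using lin_fun_bxor finite_subset by blast
  define b where "b = real (card {z \<in> cube d. f z \<noteq> lin_fun S z})"
  define N where "N = real (card (cube d))"
  have "N > 0" using card_cube_pos by (simp add: N_def)
  have eps_eq: "eps_lin d f = b / N" by (simp add: eps dist_fun_def b_def N_def)
  have pairs: "real (card {(x, y). x \<in> cube d \<and> y \<in> cube d \<and> violates f x y}) \<le> 3 * N * b"
    using card_violating_pairs_le[of "lin_fun S", OF additive, of d f]
    unfolding N_def b_def of_nat_le_iff[symmetric, where 'a = real] by simp
  have triples: "real (card {(x, y, z). x \<in> cube d \<and> y \<in> cube d \<and> z \<in> cube d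
      \<and> violates f x y \<and> violates f x z}) \<le> b * N ^ 2 + N * (2 * b) ^ 2"
    using card_violating_triples_le[of "lin_fun S", OF additive, of d f]
    unfolding N_def b_def of_nat_le_iff[symmetric, where 'a = real] by simp
  have "real (card {(x, y). x \<in> cube d \<and> y \<in> cube d \<and> violates f x y}) / N ^ 2
      \<le> 3 * N * b / N ^ 2"
    using \<open>N > 0\<close> by (intro divide_right_mono[OF pairs]) simp
  also have "\<dots> = 3 * eps_lin d f"
    using \<open>N > 0\<close> by (simp add: eps_eq power2_eq_square)
  moreover have "real (card {(x, y, z). x \<in> cube d \<and> y \<in> cube d \<and> z \<in> cube d
      \<and> violates f x y \<and> violates f x z}) / N ^ 3 \<le> (b * N ^ 2 + N * (2 * b) ^ 2) / N ^ 3"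
    using \<open>N > 0\<close> by (intro divide_right_mono[OF triples]) simp
  moreover have "\<dots> = eps_lin d f + 4 * (eps_lin d f)^2"
    using \<open>N > 0\<close> by (simp add: eps_eq field_simps power2_eq_square power3_eq_cube)
  ultimately show ?thesis
    unfolding N_def by simp
qed

end
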